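(* Let $D$ be a Dedekind domain with field of fractions $K$ and let $A$ be a $D$-algebra with standard assumptions. Then $\textnormal{Int}_K(A)\neq D[X]$ if and only if there exists a nonzero prime ideal $P$ of $D$ with $D/P$ finite such that $A/PA$ is an algebraic $D/P$-algebra of bounded degree.
   Context: A $D$-algebra $A$ satisfies the standard assumptions if it is torsion-free as a $D$-module and $A\cap K = D$ inside $K\otimes_D A$; polynomials in $K[X]$ are evaluated in $K\otimes_D A$, and $\textnormal{Int}_K(A)=\{f\in K[X]\mid f(A)\subseteq A\}$. An algebra over a field $F$ is algebraic of bounded degree if there is $n$ such that every element satisfies a nonzero polynomial over $F$ of degree at most $n$. *)

theory Defs
  imports "HOL-Computational_Algebra.Polynomial"
begin

definition subring_of :: "'k::comm_ring_1 set \<Rightarrow> bool" where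
  "subring_of D \<longleftrightarrow> 0 \<in> D \<and> 1 \<in> D \<and>
     (\<forall>x\<in>D. \<forall>y\<in>D. x + y \<in> D \<and> x - y \<in> D \<and> x * y \<in> D)"

definition is_frac_field_of :: "'k::field set \<Rightarrow> bool" where
  "is_frac_field_of D \<longleftrightarrow> (\<forall>x. \<exists>a\<in>D. \<exists>b\<in>D. b \<noteq> 0 \<and> x = a / b)"

definition ideal_of :: "'k::comm_ring_1 set \<Rightarrow> 'k set \<Rightarrow> bool" where
  "ideal_of D I \<longleftrightarrow> I \<subseteq> D \<and> 0 \<in> I \<and>
     (\<forall>x\<in>I. \<forall>y\<in>I. x + y \<in> I) \<and> (\<forall>r\<in>D. \<forall>x\<in>I. r * x \<in> I)"

definition prime_ideal_of :: "'k::comm_ring_1 set \<Rightarrow> 'k set \<Rightarrow> bool" where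
  "prime_ideal_of D P \<longleftrightarrow> ideal_of D P \<and> P \<noteq> D \<and>
     (\<forall>a\<in>D. \<forall>b\<in>D. a * b \<in> P \<longrightarrow> a \<in> P \<or> b \<in> P)"

definition maximal_ideal_of :: "'k::comm_ring_1 set \<Rightarrow> 'k set \<Rightarrow> bool" where
  "maximal_ideal_of D M \<longleftrightarrow> ideal_of D M \<and> M \<noteq> D \<and>
     (\<forall>J. ideal_of D J \<and> M \<subseteq> J \<longrightarrow> J = M \<or> J = D)"

definition noetherian_of :: "'k::comm_ring_1 set \<Rightarrow> bool" where
  "noetherian_of D \<longleftrightarrow> (\<forall>I. ideal_of D I \<longrightarrow>
     (\<exists>G. finite G \<and> G \<subseteq> D \<and> I = {\<Sum>g\<in>G. c g * g | c. \<forall>g\<in>G. c g \<in> D}))"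

definition integrally_closed_in :: "'k::field set \<Rightarrow> bool" where
  "integrally_closed_in D \<longleftrightarrow> (\<forall>x p. lead_coeff p = 1 \<and> (\<forall>i. coeff p i \<in> D)
       \<and> poly p x = 0 \<longrightarrow> x \<in> D)"

definition dedekind_domain_in :: "'k::field set \<Rightarrow> bool" where
  "dedekind_domain_in D \<longleftrightarrow> subring_of D \<and> is_frac_field_of D \<and> noetherian_of D \<and>
     integrally_closed_in D \<and>
     (\<forall>P. prime_ideal_of D P \<and> P \<noteq> {0} \<longrightarrow> maximal_ideal_of D P)"

text \<open>The ambient ring B plays the role of K \<otimes>_D A; \<iota> : K \<rightarrow> B is the structure map.
  Evaluation of f \<in> K[X] at b \<in> B.\<close>
definition peval :: "('k::comm_ring_1 \<Rightarrow> 'b::ring_1) \<Rightarrow> 'k poly \<Rightarrow> 'b \<Rightarrow> 'b" where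
  "peval \<iota> f b = (\<Sum>i\<le>degree f. \<iota> (coeff f i) * b ^ i)"

definition IntK :: "('k::comm_ring_1 \<Rightarrow> 'b::ring_1) \<Rightarrow> 'b set \<Rightarrow> 'k poly set" where
  "IntK \<iota> A = {f. \<forall>a\<in>A. peval \<iota> f a \<in> A}"

definition polys_over :: "'k::comm_ring_1 set \<Rightarrow> 'k poly set" where
  "polys_over D = {f. \<forall>i. coeff f i \<in> D}"

inductive_set ext_ideal :: "('k::comm_ring_1 \<Rightarrow> 'b::ring_1) \<Rightarrow> 'k set \<Rightarrow> 'b set \<Rightarrow> 'b set"
  for \<iota> P A where
  zero: "0 \<in> ext_ideal \<iota> P A"
| gen: "p \<in> P \<Longrightarrow> a \<in> A \<Longrightarrow> \<iota> p * a \<in> ext_ideal \<iota> P A"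
| add: "x \<in> ext_ideal \<iota> P A \<Longrightarrow> y \<in> ext_ideal \<iota> P A \<Longrightarrow> x + y \<in> ext_ideal \<iota> P A"

definition finite_quotient :: "'k::comm_ring_1 set \<Rightarrow> 'k set \<Rightarrow> bool" where
  "finite_quotient D P \<longleftrightarrow> finite ((\<lambda>a. (\<lambda>p. a + p) ` P) ` D)"

text \<open>A/PA is an algebraic D/P-algebra of bounded degree, unfolded through lifts:
  a polynomial over D/P of degree \<le> n is the reduction of a polynomial g over D of
  degree \<le> n; it is nonzero iff some coefficient of g lies outside P; it vanishes at
  the class of a iff g(a) \<in> PA.\<close>
definition alg_bounded_degree_mod ::
    "('k::comm_ring_1 \<Rightarrow> 'b::ring_1) \<Rightarrow> 'k set \<Rightarrow> 'k set \<Rightarrow> 'b set \<Rightarrow> bool" where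
  "alg_bounded_degree_mod \<iota> D P A \<longleftrightarrow> (\<exists>n::nat. \<forall>a\<in>A. \<exists>g. g \<in> polys_over D \<and>
      degree g \<le> n \<and> (\<exists>i. coeff g i \<notin> P) \<and> peval \<iota> g a \<in> ext_ideal \<iota> P A)"

end

theory Submission
  imports Defs
begin

text \<open>
  If \<open>f \<in> Int\<^sub>K(A)\<close> is not in \<open>D[X]\<close>, its conductor \<open>J = {x \<in> D. x f \<in> D[X]}\<close> is a proper
  nonzero ideal and lies in a maximal ideal \<open>P\<close>. Since \<open>P\<inverse> \<noteq> D\<close> and \<open>D\<close> is integrally closed,
  some \<open>x \<in> J\<close> gives \<open>h = x f \<in> D[X]\<close> with nonzero reduction modulo \<open>P\<close>. Then
  \<open>h(a) = x f(a) \<in> PA\<close> for all \<open>a \<in> A\<close>, so \<open>A/PA\<close> is algebraic of degree at most \<open>deg h\<close>;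
  and as \<open>PA \<inter> D = P\<close>, every element of \<open>D/P\<close> is a root of \<open>h\<close> modulo \<open>P\<close>, so \<open>D/P\<close> is finite.

  Conversely, if \<open>D/P\<close> is finite and every element of \<open>A/PA\<close> satisfies a polynomial of degree
  at most \<open>n\<close>, the product \<open>G\<close> of all polynomials of degree at most \<open>n\<close> over a set of
  representatives of \<open>D/P\<close> that are nonzero modulo \<open>P\<close> maps \<open>A\<close> into \<open>PA\<close>; for
  \<open>t \<in> P\<inverse> - D\<close> the polynomial \<open>t G\<close> lies in \<open>Int\<^sub>K(A)\<close> but not in \<open>D[X]\<close>.
\<close>

section \<open>Ideals of a subring\<close>

text \<open>\<open>products_in [Q\<^sub>1, ..., Q\<^sub>n] I\<close> says that the ideal product \<open>Q\<^sub>1 \<cdots> Q\<^sub>n\<close> lies in \<open>I\<close>,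
  expressed through the products \<open>q\<^sub>1 \<cdots> q\<^sub>n\<close> that generate it.\<close>
definition products_in :: "'a::monoid_mult set list \<Rightarrow> 'a set \<Rightarrow> bool" where
  "products_in Qs I \<longleftrightarrow> (\<forall>xs. list_all2 (\<in>) xs Qs \<longrightarrow> prod_list xs \<in> I)"

locale subring =
  fixes D :: "'k::comm_ring_1 set"
  assumes subring: "subring_of D"
begin

lemma subring_0 [simp]: "0 \<in> D" and subring_1 [simp]: "1 \<in> D"
  using subring by (auto simp: subring_of_def)

lemma subring_add: "x \<in> D \<Longrightarrow> y \<in> D \<Longrightarrow> x + y \<in> D"
  and subring_diff: "x \<in> D \<Longrightarrow> y \<in> D \<Longrightarrow> x - y \<in> D"
  and subring_mult: "x \<in> D \<Longrightarrow> y \<in> D \<Longrightarrow> x * y \<in> D"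
  using subring by (auto simp: subring_of_def)

lemma subring_uminus: "x \<in> D \<Longrightarrow> - x \<in> D"
  using subring_diff[of 0 x] by simp

lemma subring_sum: "(\<And>i. i \<in> S \<Longrightarrow> f i \<in> D) \<Longrightarrow> sum f S \<in> D"
  by (induction S rule: infinite_finite_induct) (auto intro: subring_add)

lemma subring_power: "x \<in> D \<Longrightarrow> x ^ n \<in> D"
  by (induction n) (auto intro: subring_mult)

context
  fixes I assumes I: "ideal_of D I"
begin

lemma ideal_subset: "x \<in> I \<Longrightarrow> x \<in> D"
  and ideal_0 [simp]: "0 \<in> I"
  and ideal_add: "x \<in> I \<Longrightarrow> y \<in> I \<Longrightarrow> x + y \<in> I"
  and ideal_mult_left: "r \<in> D \<Longrightarrow> x \<in> I \<Longrightarrow> r * x \<in> I"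
  using I by (auto simp: ideal_of_def)

lemma ideal_mult_right: "r \<in> D \<Longrightarrow> x \<in> I \<Longrightarrow> x * r \<in> I"
  using ideal_mult_left by (simp add: mult.commute)

lemma ideal_uminus: "x \<in> I \<Longrightarrow> - x \<in> I"
  using ideal_mult_left[of "-1" x] subring_uminus[of 1] by simp

lemma ideal_diff: "x \<in> I \<Longrightarrow> y \<in> I \<Longrightarrow> x - y \<in> I"
  using ideal_add[of x "- y"] ideal_uminus by simp

lemma ideal_sum: "(\<And>i. i \<in> S \<Longrightarrow> f i \<in> I) \<Longrightarrow> sum f S \<in> I"
  by (induction S rule: infinite_finite_induct) (auto intro: ideal_add)

lemma ideal_eq_if_one: "1 \<in> I \<Longrightarrow> I = D"
  using ideal_mult_right[of _ 1] ideal_subset by auto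

end

lemma ideal_zero: "ideal_of D {0}"
  by (auto simp: ideal_of_def)

lemma ideal_self: "ideal_of D D"
  by (auto simp: ideal_of_def intro: subring_add subring_mult)

lemma prime_ideal_one_notin: "prime_ideal_of D P \<Longrightarrow> 1 \<notin> P"
  using ideal_eq_if_one unfolding prime_ideal_of_def by blast

lemma prime_ideal_mult_notin:
  "prime_ideal_of D P \<Longrightarrow> a \<in> D \<Longrightarrow> a \<notin> P \<Longrightarrow> b \<in> D \<Longrightarrow> b \<notin> P \<Longrightarrow> a * b \<notin> P"
  unfolding prime_ideal_of_def by blast

lemma ideal_UN_incseq:
  assumes I: "\<And>i. ideal_of D (I i)" and mono: "\<And>i. I i \<subseteq> I (Suc i)"
  shows "ideal_of D (\<Union>(range I))"
  unfolding ideal_of_def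
proof (intro conjI ballI)
  have le: "i \<le> j \<Longrightarrow> I i \<subseteq> I j" for i j using lift_Suc_mono_le[of I, OF mono] .
  show "\<Union>(range I) \<subseteq> D" using ideal_subset[OF I] by blast
  show "0 \<in> \<Union>(range I)" using ideal_0[OF I] by blast
  fix x y assume "x \<in> \<Union>(range I)" "y \<in> \<Union>(range I)"
  then obtain i j where "x \<in> I i" "y \<in> I j" by blast
  then have "x \<in> I (max i j)" "y \<in> I (max i j)" using le[of i "max i j"] le[of j "max i j"] by auto
  then show "x + y \<in> \<Union>(range I)" using ideal_add[OF I] by blast
next
  fix r x assume "r \<in> D" "x \<in> \<Union>(range I)"
  then show "r * x \<in> \<Union>(range I)" using ideal_mult_left[OF I] by blast
qed

definition lin_comb :: "('i \<Rightarrow> 'k) \<Rightarrow> 'i set \<Rightarrow> 'k set" where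
  "lin_comb v S = {\<Sum>i\<in>S. c i * v i | c. \<forall>i\<in>S. c i \<in> D}"

lemma lin_combI: "x = (\<Sum>i\<in>S. c i * v i) \<Longrightarrow> (\<And>i. i \<in> S \<Longrightarrow> c i \<in> D) \<Longrightarrow> x \<in> lin_comb v S"
  unfolding lin_comb_def by blast

lemma ideal_lin_comb:
  assumes "\<And>i. i \<in> S \<Longrightarrow> v i \<in> D"
  shows "ideal_of D (lin_comb v S)"
  unfolding ideal_of_def
proof (intro conjI ballI)
  show "lin_comb v S \<subseteq> D"
    using assms by (auto simp: lin_comb_def intro!: subring_sum subring_mult)
  show "0 \<in> lin_comb v S" by (rule lin_combI[where c="\<lambda>_. 0"]) simp_all
  fix x y assume "x \<in> lin_comb v S" "y \<in> lin_comb v S"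
  then obtain c e where "x = (\<Sum>i\<in>S. c i * v i)" "y = (\<Sum>i\<in>S. e i * v i)"
    "\<forall>i\<in>S. c i \<in> D" "\<forall>i\<in>S. e i \<in> D"
    by (auto simp: lin_comb_def)
  then show "x + y \<in> lin_comb v S"
    by (intro lin_combI[where c="\<lambda>i. c i + e i"]) (simp_all add: sum.distrib distrib_right subring_add)
next
  fix r x assume "r \<in> D" "x \<in> lin_comb v S"
  then obtain c where "x = (\<Sum>i\<in>S. c i * v i)" "\<forall>i\<in>S. c i \<in> D"
    by (auto simp: lin_comb_def)
  with \<open>r \<in> D\<close> show "r * x \<in> lin_comb v S"
    by (intro lin_combI[where c="\<lambda>i. r * c i"]) (simp_all add: sum_distrib_left mult.assoc subring_mult)
qed

lemma lin_comb_subset_ideal: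
  "ideal_of D I \<Longrightarrow> (\<And>i. i \<in> S \<Longrightarrow> v i \<in> I) \<Longrightarrow> lin_comb v S \<subseteq> I"
  by (auto simp: lin_comb_def intro!: ideal_sum ideal_mult_left)

lemma lin_comb_mono:
  assumes "finite T" "S \<subseteq> T"
  shows "lin_comb v S \<subseteq> lin_comb v T"
proof
  fix x assume "x \<in> lin_comb v S"
  then obtain c where x: "x = (\<Sum>i\<in>S. c i * v i)" "\<forall>i\<in>S. c i \<in> D"
    by (auto simp: lin_comb_def)
  define c' where "c' i = (if i \<in> S then c i else 0)" for i
  have "x = (\<Sum>i\<in>T. c' i * v i)"
    unfolding x c'_def using assms by (intro sum.mono_neutral_cong_left) auto
  then show "x \<in> lin_comb v T" by (rule lin_combI) (use x in \<open>simp add: c'_def\<close>)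
qed

lemma mem_lin_comb:
  assumes "finite S" "j \<in> S"
  shows "v j \<in> lin_comb v S"
proof -
  have "v j \<in> lin_comb v {j}" by (rule lin_combI[where c="\<lambda>_. 1"]) simp_all
  then show ?thesis using lin_comb_mono[of S "{j}" v] assms by blast
qed

definition ideal_adjoin :: "'k set \<Rightarrow> 'k \<Rightarrow> 'k set" where
  "ideal_adjoin I a = {i + r * a | i r. i \<in> I \<and> r \<in> D}"

lemma ideal_ideal_adjoin:
  assumes I: "ideal_of D I" and a: "a \<in> D"
  shows "ideal_of D (ideal_adjoin I a)"
  unfolding ideal_of_def
proof (intro conjI ballI)
  show "ideal_adjoin I a \<subseteq> D"
    using a by (auto simp: ideal_adjoin_def intro!: subring_add subring_mult dest: ideal_subset[OF I])
  have "0 = 0 + 0 * a \<and> 0 \<in> I \<and> (0::'k) \<in> D" using ideal_0[OF I] by simp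
  then show "0 \<in> ideal_adjoin I a" unfolding ideal_adjoin_def by blast
  fix x y assume "x \<in> ideal_adjoin I a" "y \<in> ideal_adjoin I a"
  then obtain i r j s where xy: "x = i + r * a" "y = j + s * a" "i \<in> I" "j \<in> I" "r \<in> D" "s \<in> D"
    unfolding ideal_adjoin_def by blast
  then have "x + y = (i + j) + (r + s) * a" by (simp add: algebra_simps)
  moreover have "i + j \<in> I" "r + s \<in> D" using xy I by (auto intro: ideal_add subring_add)
  ultimately show "x + y \<in> ideal_adjoin I a" unfolding ideal_adjoin_def by blast
next
  fix r x assume r: "r \<in> D" and "x \<in> ideal_adjoin I a"
  then obtain i s where xy: "x = i + s * a" "i \<in> I" "s \<in> D"
    unfolding ideal_adjoin_def by blast
  then have "r * x = r * i + (r * s) * a" by (simp add: algebra_simps)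
  moreover have "r * i \<in> I" "r * s \<in> D" using xy I r by (auto intro: ideal_mult_left subring_mult)
  ultimately show "r * x \<in> ideal_adjoin I a" unfolding ideal_adjoin_def by blast
qed

lemma subset_ideal_adjoin: "I \<subseteq> ideal_adjoin I a"
proof
  fix x assume "x \<in> I"
  then have "x = x + 0 * a \<and> x \<in> I \<and> (0::'k) \<in> D" by simp
  then show "x \<in> ideal_adjoin I a" unfolding ideal_adjoin_def by blast
qed

lemma mem_ideal_adjoin: "ideal_of D I \<Longrightarrow> a \<in> ideal_adjoin I a"
proof -
  assume "ideal_of D I"
  then have "a = 0 + 1 * a \<and> 0 \<in> I \<and> (1::'k) \<in> D" using ideal_0 by simp
  then show ?thesis unfolding ideal_adjoin_def by blast
qed

lemma mem_ideal_adjoin_zero_iff: "x \<in> ideal_adjoin {0} a \<longleftrightarrow> (\<exists>r\<in>D. x = r * a)"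
  unfolding ideal_adjoin_def by auto

lemma maximal_imp_prime_ideal:
  assumes M: "maximal_ideal_of D M"
  shows "prime_ideal_of D M"
  unfolding prime_ideal_of_def
proof (intro conjI ballI impI)
  show I: "ideal_of D M" "M \<noteq> D" using M by (auto simp: maximal_ideal_of_def)
  fix a b assume ab: "a \<in> D" "b \<in> D" "a * b \<in> M"
  show "a \<in> M \<or> b \<in> M"
  proof (cases "a \<in> M")
    case False
    then have "ideal_adjoin M a = D"
      using M ideal_ideal_adjoin[OF I(1) ab(1)] subset_ideal_adjoin[of M a] mem_ideal_adjoin[OF I(1)]
      unfolding maximal_ideal_of_def by blast
    then obtain m r where mr: "1 = m + r * a" "m \<in> M" "r \<in> D"
      using subring_1 unfolding ideal_adjoin_def by blast
    then have "b = b * m + r * (a * b)" by (metis mult.commute mult.left_commute distrib_left mult_1_right)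
    moreover have "b * m \<in> M" "r * (a * b) \<in> M"
      using mr ab I by (auto intro: ideal_mult_left ideal_mult_right)
    ultimately show ?thesis using ideal_add[OF I(1)] by metis
  qed simp
qed

definition nonzero_primes :: "'k set list \<Rightarrow> bool" where
  "nonzero_primes Qs \<longleftrightarrow> (\<forall>Q\<in>set Qs. prime_ideal_of D Q \<and> Q \<noteq> {0})"

lemma products_in_append:
  assumes I: "ideal_of D I" and ab: "a \<in> D" "b \<in> D" "a * b \<in> I"
    and Qa: "products_in Qa (ideal_adjoin I a)" and Qb: "products_in Qb (ideal_adjoin I b)"
  shows "products_in (Qa @ Qb) I"
  unfolding products_in_def
proof (intro allI impI)
  fix xs assume "list_all2 (\<in>) xs (Qa @ Qb)"
  then obtain us vs where uv: "xs = us @ vs" "list_all2 (\<in>) us Qa" "list_all2 (\<in>) vs Qb"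
    by (auto simp: list_all2_append2)
  obtain i r where ir: "prod_list us = i + r * a" "i \<in> I" "r \<in> D"
    using Qa uv unfolding products_in_def ideal_adjoin_def by blast
  obtain j s where js: "prod_list vs = j + s * b" "j \<in> I" "s \<in> D"
    using Qb uv unfolding products_in_def ideal_adjoin_def by blast
  have "prod_list xs = i * (j + s * b) + (r * a) * j + (r * s) * (a * b)"
    using ir js uv by (simp add: algebra_simps)
  moreover have "j + s * b \<in> D" "r * a \<in> D" "r * s \<in> D"
    using js ir ab I by (auto intro: subring_add subring_mult ideal_subset)
  then have "i * (j + s * b) \<in> I" "(r * a) * j \<in> I" "(r * s) * (a * b) \<in> I"
    using ir js ab I by (auto intro: ideal_mult_left ideal_mult_right)
  ultimately show "prod_list xs \<in> I" using I by (auto intro: ideal_add)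
qed

lemma prime_ideal_contains_factor:
  assumes P: "prime_ideal_of D P" and Qs: "nonzero_primes Qs"
    and prod: "products_in Qs I" and IP: "I \<subseteq> P"
  shows "\<exists>Q\<in>set Qs. Q \<subseteq> P"
proof (rule ccontr)
  assume "\<not> ?thesis"
  then have "\<forall>Q\<in>set Qs. \<exists>x. x \<in> Q \<and> x \<notin> P" by blast
  then obtain pick where pick: "\<And>Q. Q \<in> set Qs \<Longrightarrow> pick Q \<in> Q \<and> pick Q \<notin> P" by metis
  define xs where "xs = map pick Qs"
  have "list_all2 (\<in>) xs Qs"
    unfolding xs_def list_all2_map1 using pick by (simp add: list_all2_same)
  then have "prod_list xs \<in> P" using prod IP unfolding products_in_def by blast
  moreover have "\<forall>x\<in>set xs. x \<in> D \<and> x \<notin> P"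
    using pick Qs ideal_subset unfolding xs_def nonzero_primes_def prime_ideal_of_def by fastforce
  then have "prod_list xs \<in> D \<and> prod_list xs \<notin> P"
  proof (induction xs)
    case Nil then show ?case using prime_ideal_one_notin[OF P] by simp
  next
    case (Cons x xs)
    then show ?case using prime_ideal_mult_notin[OF P] by (simp add: subring_mult)
  qed
  ultimately show False by blast
qed

end


section \<open>Noetherian subrings\<close>

locale noetherian_subring = subring +
  assumes noetherian: "noetherian_of D"
begin

lemma ideal_chain_stabilises:
  assumes I: "\<And>i. ideal_of D (I i)" and mono: "\<And>i. I i \<subseteq> I (Suc i)"
  shows "\<exists>k. I (Suc k) = I k"
proof -
  define U where "U = \<Union>(range I)"
  have "ideal_of D U" unfolding U_def by (rule ideal_UN_incseq[of I, OF I mono])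
  then obtain G where G: "finite G" "U = lin_comb (\<lambda>g. g) G"
    using noetherian unfolding noetherian_of_def lin_comb_def by blast
  have "G \<subseteq> U" unfolding G(2) using mem_lin_comb[OF G(1), of _ "\<lambda>g. g"] by blast
  moreover have "subset.chain UNIV (range I)"
    using lift_Suc_mono_le[of I, OF mono] nat_le_linear unfolding subset.chain_def by blast
  ultimately obtain B where "B \<in> range I" "G \<subseteq> B"
    using finite_subset_Union_chain[OF G(1), of "range I" UNIV] unfolding U_def by blast
  then obtain k where "G \<subseteq> I k" by blast
  then have "U \<subseteq> I k" unfolding G(2) by (intro lin_comb_subset_ideal[OF I]) blast
  moreover have "I (Suc k) \<subseteq> U" unfolding U_def by blast
  ultimately show ?thesis using mono[of k] by (intro exI[of _ k]) blast
qed

lemma wf_ideal_psupset: "wf {(J, I). ideal_of D I \<and> ideal_of D J \<and> I \<subset> J}"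
  unfolding wf_iff_no_infinite_down_chain
proof
  assume "\<exists>f. \<forall>i. (f (Suc i), f i) \<in> {(J, I). ideal_of D I \<and> ideal_of D J \<and> I \<subset> J}"
  then obtain I where "\<forall>i. (I (Suc i), I i) \<in> {(J, I). ideal_of D I \<and> ideal_of D J \<and> I \<subset> J}"
    by blast
  then have I: "\<And>i. ideal_of D (I i)" "\<And>i. I i \<subset> I (Suc i)" by auto
  then obtain k where "I (Suc k) = I k" using ideal_chain_stabilises[of I] by blast
  then show False using I(2)[of k] by simp
qed

lemma ideal_noetherian_induct [consumes 1, case_names less]:
  assumes "ideal_of D I"
    and "\<And>I. ideal_of D I \<Longrightarrow> (\<And>J. ideal_of D J \<Longrightarrow> I \<subset> J \<Longrightarrow> Q J) \<Longrightarrow> Q I"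
  shows "Q I"
  using assms(1)
proof (induction I rule: wf_induct_rule[OF wf_ideal_psupset])
  case (1 I)
  then show ?case using assms(2) by blast
qed

lemma exists_maximal_ideal:
  "ideal_of D I \<Longrightarrow> I \<noteq> D \<Longrightarrow> \<exists>M. maximal_ideal_of D M \<and> I \<subseteq> M"
proof (induction I rule: ideal_noetherian_induct)
  case (less I)
  show ?case
  proof (cases "maximal_ideal_of D I")
    case False
    then obtain J where "ideal_of D J" "I \<subset> J" "J \<noteq> D"
      using less.prems less.hyps unfolding maximal_ideal_of_def by blast
    then obtain M where "maximal_ideal_of D M" "J \<subseteq> M" using less.IH by blast
    then show ?thesis using \<open>I \<subset> J\<close> by blast
  qed blast
qed

lemma exists_prime_product:
  "ideal_of D I \<Longrightarrow> I \<noteq> {0} \<Longrightarrow> \<exists>Qs. nonzero_primes Qs \<and> products_in Qs I"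
proof (induction I rule: ideal_noetherian_induct)
  case (less I)
  consider "I = D" | "prime_ideal_of D I"
    | a b where "a \<in> D" "b \<in> D" "a * b \<in> I" "a \<notin> I" "b \<notin> I"
    using less.hyps unfolding prime_ideal_of_def by blast
  then show ?case
  proof cases
    case 1
    then have "products_in [] I" unfolding products_in_def by simp
    then show ?thesis unfolding nonzero_primes_def by (intro exI[of _ "[]"]) simp
  next
    case 2
    have "products_in [I] I" unfolding products_in_def by (auto simp: list_all2_Cons2)
    then show ?thesis using 2 less.prems unfolding nonzero_primes_def by (intro exI[of _ "[I]"]) simp
  next
    case (3 a b)
    have adjoin: "ideal_of D (ideal_adjoin I c) \<and> I \<subset> ideal_adjoin I c \<and> ideal_adjoin I c \<noteq> {0}"
      if "c \<in> D" "c \<notin> I" for c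
      using ideal_ideal_adjoin[OF less.hyps that(1)] subset_ideal_adjoin[of I c]
        mem_ideal_adjoin[OF less.hyps, of c] ideal_0[OF less.hyps] that less.prems by auto
    obtain Qa Qb where "nonzero_primes Qa" "products_in Qa (ideal_adjoin I a)"
      "nonzero_primes Qb" "products_in Qb (ideal_adjoin I b)"
      using less.IH adjoin[of a] adjoin[of b] 3 by meson
    then have "nonzero_primes (Qa @ Qb)" "products_in (Qa @ Qb) I"
      using products_in_append[OF less.hyps 3(1-3)] unfolding nonzero_primes_def by auto
    then show ?thesis by blast
  qed
qed

end


section \<open>Dedekind domains\<close>

locale dedekind_domain =
  fixes D :: "'k::field set"
  assumes dedekind: "dedekind_domain_in D"

sublocale dedekind_domain \<subseteq> noetherian_subring
  using dedekind by unfold_locales (simp_all add: dedekind_domain_in_def)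

context dedekind_domain
begin

lemma nonzero_prime_imp_maximal: "prime_ideal_of D P \<Longrightarrow> P \<noteq> {0} \<Longrightarrow> maximal_ideal_of D P"
  using dedekind by (simp add: dedekind_domain_in_def)

lemma mem_if_monic_relation:
  assumes c: "\<And>i. i \<le> k \<Longrightarrow> c i \<in> D" and rel: "t ^ Suc k = (\<Sum>i\<le>k. c i * t ^ i)"
  shows "t \<in> D"
proof -
  define q where "q = (\<Sum>i\<le>k. monom (c i) i)"
  define p where "p = monom 1 (Suc k) - q"
  have dq: "degree q \<le> k" unfolding q_def
    by (rule degree_sum_le) (auto intro: order.trans[OF degree_monom_le])
  have cq: "coeff q j = (if j \<le> k then c j else 0)" for j
    unfolding q_def by (simp add: coeff_sum coeff_monom)
  have dp: "degree p = Suc k" unfolding p_def using dq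
    by (simp only: diff_conv_add_uminus, subst degree_add_eq_left) (simp_all add: degree_monom_eq)
  have "lead_coeff p = 1" using dp dq unfolding p_def by (simp add: coeff_monom coeff_eq_0)
  moreover have "coeff p j \<in> D" for j
    unfolding p_def using c by (simp add: coeff_monom cq subring_diff subring_uminus)
  moreover have "poly p t = 0"
    unfolding p_def q_def using rel by (simp add: poly_sum poly_monom)
  ultimately show ?thesis using dedekind unfolding dedekind_domain_in_def integrally_closed_in_def by blast
qed

text \<open>The \<open>D\<close>-modules spanned by \<open>d, t d, ..., t\<^sup>k d\<close> form an ascending chain of ideals
  inside \<open>J\<close>; its stabilisation is a monic relation for \<open>t\<close>.\<close>
lemma mem_if_stabilises_ideal:
  assumes J: "ideal_of D J" "J \<noteq> {0}" and stable: "\<And>x. x \<in> J \<Longrightarrow> t * x \<in> J"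
  shows "t \<in> D"
proof -
  obtain d where d: "d \<in> J" "d \<noteq> 0" using J ideal_0[OF J(1)] by blast
  have power: "t ^ i * d \<in> J" for i
    by (induction i) (use d stable in \<open>auto simp: mult.assoc\<close>)
  define I where "I k = lin_comb (\<lambda>i. t ^ i * d) {..k}" for k
  have "ideal_of D (I k)" for k
    unfolding I_def using power ideal_subset[OF J(1)] by (intro ideal_lin_comb) blast
  moreover have "I k \<subseteq> I (Suc k)" for k
    unfolding I_def by (rule lin_comb_mono) auto
  ultimately obtain k where "I (Suc k) = I k" using ideal_chain_stabilises[of I] by blast
  moreover have "t ^ Suc k * d \<in> I (Suc k)" unfolding I_def by (rule mem_lin_comb) auto
  ultimately have "t ^ Suc k * d \<in> lin_comb (\<lambda>i. t ^ i * d) {..k}" unfolding I_def by simp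
  then obtain c where c: "t ^ Suc k * d = (\<Sum>i\<le>k. c i * (t ^ i * d))" "\<forall>i\<in>{..k}. c i \<in> D"
    unfolding lin_comb_def by blast
  have "t ^ Suc k * d = (\<Sum>i\<le>k. c i * t ^ i) * d"
    unfolding c(1) by (simp add: sum_distrib_right mult.assoc)
  then have "t ^ Suc k = (\<Sum>i\<le>k. c i * t ^ i)" by (metis d(2) mult_cancel_right)
  then show ?thesis using c(2) mem_if_monic_relation[of k c t] by blast
qed

lemma exists_minimal_prime_product:
  assumes I: "ideal_of D I" "I \<noteq> {0}" and P: "prime_ideal_of D P" "P \<noteq> {0}" and IP: "I \<subseteq> P"
  shows "\<exists>Qs Qs'. nonzero_primes (Qs @ Qs') \<and> products_in (Qs @ P # Qs') I
           \<and> \<not> products_in (Qs @ Qs') I"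
proof -
  define good where "good Qs \<longleftrightarrow> nonzero_primes Qs \<and> products_in Qs I" for Qs
  obtain Qs0 where "good Qs0" using exists_prime_product[OF I] unfolding good_def by blast
  then obtain Qs where Qs: "good Qs" and min: "\<forall>Qs'. good Qs' \<longrightarrow> length Qs \<le> length Qs'"
    using ex_has_least_nat[of good Qs0 length] by blast
  then obtain Q where Q: "Q \<in> set Qs" "Q \<subseteq> P"
    using prime_ideal_contains_factor[OF P(1) _ _ IP] unfolding good_def by blast
  moreover have "maximal_ideal_of D Q"
    using Qs Q(1) nonzero_prime_imp_maximal unfolding good_def nonzero_primes_def by blast
  ultimately have "Q = P" using P(1) unfolding maximal_ideal_of_def prime_ideal_of_def by blast
  then obtain Qs1 Qs2 where split: "Qs = Qs1 @ P # Qs2" using split_list[OF Q(1)] by blast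
  have "nonzero_primes (Qs1 @ Qs2)" using Qs split unfolding good_def nonzero_primes_def by auto
  moreover have "\<not> good (Qs1 @ Qs2)" using min split by force
  ultimately show ?thesis using Qs split unfolding good_def by blast
qed

text \<open>Choose a product of nonzero primes inside \<open>aD\<close>, for some nonzero \<open>a \<in> P\<close>, with as few
  factors as possible; one factor is \<open>P\<close>, and any \<open>b\<close> in the product of the others with
  \<open>b \<notin> aD\<close> yields \<open>t = b / a\<close>.\<close>
lemma prime_ideal_inverse_nontrivial:
  assumes P: "prime_ideal_of D P" "P \<noteq> {0}"
  shows "\<exists>t. t \<notin> D \<and> (\<forall>p\<in>P. t * p \<in> D)"
proof -
  have PI: "ideal_of D P" using P unfolding prime_ideal_of_def by simp
  obtain a where a: "a \<in> P" "a \<noteq> 0" using P(2) ideal_0[OF PI] by blast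
  have aD: "a \<in> D" using a(1) ideal_subset[OF PI] by simp
  define Da where "Da = ideal_adjoin {0} a"
  have Da: "ideal_of D Da" "Da \<noteq> {0}"
    using ideal_ideal_adjoin[OF ideal_zero aD] mem_ideal_adjoin[OF ideal_zero, of a] a(2)
    unfolding Da_def by auto
  have "Da \<subseteq> P" using ideal_mult_left[OF PI _ a(1)] by (auto simp: Da_def mem_ideal_adjoin_zero_iff)
  then obtain Qs Qs' where Qs: "nonzero_primes (Qs @ Qs')" "products_in (Qs @ P # Qs') Da"
    "\<not> products_in (Qs @ Qs') Da"
    using exists_minimal_prime_product[OF Da P] by blast
  then obtain ys where ys: "list_all2 (\<in>) ys (Qs @ Qs')" "prod_list ys \<notin> Da"
    unfolding products_in_def by blast
  obtain us vs where uv: "ys = us @ vs" "list_all2 (\<in>) us Qs" "list_all2 (\<in>) vs Qs'"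
    using ys(1) by (auto simp: list_all2_append2)
  define b where "b = prod_list ys"
  show ?thesis
  proof (intro exI[of _ "b / a"] conjI ballI)
    show "b / a \<notin> D"
    proof
      assume "b / a \<in> D"
      then have "b \<in> Da" unfolding Da_def mem_ideal_adjoin_zero_iff using a(2) by force
      then show False using ys(2) b_def by simp
    qed
  next
    fix p assume "p \<in> P"
    then have "list_all2 (\<in>) (us @ p # vs) (Qs @ P # Qs')" using uv by (simp add: list_all2_appendI)
    then have "prod_list (us @ p # vs) \<in> Da" using Qs(2) unfolding products_in_def by blast
    then obtain r where r: "r \<in> D" "prod_list (us @ p # vs) = r * a"
      unfolding Da_def mem_ideal_adjoin_zero_iff by blast
    have "b * p = r * a" using r(2) uv(1) unfolding b_def by (simp add: algebra_simps)
    then have "b / a * p = r" using a(2) by (simp add: field_simps)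
    then show "b / a * p \<in> D" using r by simp
  qed
qed

lemma mem_maximal_if_inverse_mult:
  assumes M: "maximal_ideal_of D M" and t: "t \<notin> D" "\<forall>m\<in>M. t * m \<in> D"
    and c: "c \<in> D" "t * c \<in> D"
  shows "c \<in> M"
proof (rule ccontr)
  assume "c \<notin> M"
  have MI: "ideal_of D M" using M unfolding maximal_ideal_of_def by simp
  define K where "K = {y \<in> D. t * y \<in> D}"
  have K: "ideal_of D K" unfolding ideal_of_def K_def
    by (auto simp: distrib_left intro: subring_add subring_mult) (metis mult.left_commute subring_mult)
  have "M \<subseteq> K" using t ideal_subset[OF MI] unfolding K_def by auto
  moreover have "K \<noteq> M" using c \<open>c \<notin> M\<close> unfolding K_def by blast
  ultimately have "K = D" using M K unfolding maximal_ideal_of_def by blast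
  then have "t * 1 \<in> D" using subring_1 unfolding K_def by blast
  then show False using t(1) by simp
qed

end


section \<open>Polynomials over a subring, modulo a prime\<close>

lemma pCons_polys_over_iff: "pCons a p \<in> polys_over S \<longleftrightarrow> a \<in> S \<and> p \<in> polys_over S"
  unfolding polys_over_def
proof safe
  assume "\<forall>i. coeff (pCons a p) i \<in> S"
  from this[rule_format, of 0] this[rule_format, of "Suc i" for i]
  show "a \<in> S" "coeff p i \<in> S" for i by simp_all
next
  fix i assume "a \<in> S" "\<forall>i. coeff p i \<in> S"
  then show "coeff (pCons a p) i \<in> S" by (cases i) simp_all
qed

lemma zero_polys_over: "0 \<in> S \<Longrightarrow> 0 \<in> polys_over S"
  by (simp add: polys_over_def)

lemma finite_bounded_polys:
  assumes "finite R"
  shows "finite {s :: 'a::zero poly. degree s \<le> n \<and> (\<forall>i\<le>n. coeff s i \<in> R)}"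
proof -
  let ?S = "{s :: 'a poly. degree s \<le> n \<and> (\<forall>i\<le>n. coeff s i \<in> R)}"
  let ?coeffs = "\<lambda>s. map (coeff s) [0..<Suc n]"
  have "inj_on ?coeffs ?S"
  proof (rule inj_onI, rule poly_eqI)
    fix s s' i assume s: "s \<in> ?S" "s' \<in> ?S" and eq: "?coeffs s = ?coeffs s'"
    show "coeff s i = coeff s' i"
    proof (cases "i \<le> n")
      case True
      have "\<forall>j\<in>set [0..<Suc n]. coeff s j = coeff s' j" using eq by (simp only: map_eq_conv)
      moreover have "i \<in> set [0..<Suc n]" unfolding set_upt using True by simp
      ultimately show ?thesis by blast
    qed (use s in \<open>simp add: coeff_eq_0\<close>)
  qed
  moreover have "?coeffs ` ?S \<subseteq> {xs. set xs \<subseteq> R \<and> length xs = Suc n}" by auto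
  ultimately show ?thesis
    using finite_lists_length_eq[OF assms] by (meson finite_imageD finite_subset)
qed

context subring
begin

lemma one_polys_over: "1 \<in> polys_over D"
  by (simp add: polys_over_def coeff_1)

lemma poly_mem: "h \<in> polys_over D \<Longrightarrow> x \<in> D \<Longrightarrow> poly h x \<in> D"
  unfolding poly_altdef polys_over_def by (auto intro!: subring_sum subring_mult subring_power)

lemma synthetic_div_polys_over:
  "h \<in> polys_over D \<Longrightarrow> c \<in> D \<Longrightarrow> synthetic_div h c \<in> polys_over D"
  by (induction h rule: pCons_induct) (auto simp: pCons_polys_over_iff poly_mem zero_polys_over)

context
  fixes I assumes I: "ideal_of D I"
begin

lemma const_polys_over_ideal: "c \<in> I \<Longrightarrow> [:c:] \<in> polys_over I"
  using zero_polys_over[OF ideal_0[OF I]] by (simp add: pCons_polys_over_iff)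

lemma add_polys_over_ideal: "p \<in> polys_over I \<Longrightarrow> q \<in> polys_over I \<Longrightarrow> p + q \<in> polys_over I"
  by (simp add: polys_over_def ideal_add[OF I])

lemma mult_polys_over_ideal: "p \<in> polys_over D \<Longrightarrow> q \<in> polys_over I \<Longrightarrow> p * q \<in> polys_over I"
  by (auto simp: polys_over_def coeff_mult intro!: ideal_sum[OF I] ideal_mult_left[OF I])

end

lemma diff_polys_over_ideal:
  "ideal_of D I \<Longrightarrow> p \<in> polys_over I \<Longrightarrow> q \<in> polys_over I \<Longrightarrow> p - q \<in> polys_over I"
  by (simp add: polys_over_def ideal_diff)

lemma mult_polys_over: "p \<in> polys_over D \<Longrightarrow> q \<in> polys_over D \<Longrightarrow> p * q \<in> polys_over D"
  by (rule mult_polys_over_ideal[OF ideal_self])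

lemma prod_polys_over: "(\<And>s. s \<in> T \<Longrightarrow> s \<in> polys_over D) \<Longrightarrow> \<Prod>T \<in> polys_over D"
  by (induction T rule: infinite_finite_induct) (auto intro: mult_polys_over one_polys_over)

lemma mult_not_in_polys_over_prime:
  assumes P: "prime_ideal_of D P"
    and p: "p \<in> polys_over D" "p \<notin> polys_over P" and q: "q \<in> polys_over D" "q \<notin> polys_over P"
  shows "p * q \<notin> polys_over P"
proof -
  have PI: "ideal_of D P" using P unfolding prime_ideal_of_def by simp
  have fin: "finite {i. coeff r i \<notin> P}" for r :: "'k poly"
    by (rule finite_subset[of _ "{..degree r}"]) (auto, metis ideal_0[OF PI] coeff_eq_0 not_le)
  define i0 where "i0 = Max {i. coeff p i \<notin> P}"
  define j0 where "j0 = Max {i. coeff q i \<notin> P}"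
  have i0: "coeff p i0 \<notin> P" "\<And>i. i0 < i \<Longrightarrow> coeff p i \<in> P"
    unfolding i0_def using Max_in[OF fin] Max_ge[OF fin] p(2)
    by (auto simp: polys_over_def not_le[symmetric])
  have j0: "coeff q j0 \<notin> P" "\<And>i. j0 < i \<Longrightarrow> coeff q i \<in> P"
    unfolding j0_def using Max_in[OF fin] Max_ge[OF fin] q(2)
    by (auto simp: polys_over_def not_le[symmetric])
  define T where "T k = coeff p k * coeff q (i0 + j0 - k)" for k
  have split: "coeff (p * q) (i0 + j0) = T i0 + (\<Sum>k\<in>{..i0+j0} - {i0}. T k)"
    unfolding T_def coeff_mult by (subst sum.remove[of _ i0]) auto
  have rest: "(\<Sum>k\<in>{..i0+j0} - {i0}. T k) \<in> P"
  proof (rule ideal_sum[OF PI])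
    fix k assume k: "k \<in> {..i0+j0} - {i0}"
    show "T k \<in> P"
    proof (cases "k < i0")
      case True
      then have "coeff q (i0 + j0 - k) \<in> P" using j0(2) by simp
      moreover have "coeff p k \<in> D" using p(1) by (simp add: polys_over_def)
      ultimately show ?thesis unfolding T_def by (rule ideal_mult_left[OF PI, rotated])
    next
      case False
      then have "coeff p k \<in> P" using i0(2) k by simp
      moreover have "coeff q (i0 + j0 - k) \<in> D" using q(1) by (simp add: polys_over_def)
      ultimately show ?thesis unfolding T_def by (rule ideal_mult_right[OF PI, rotated])
    qed
  qed
  have "coeff p i0 \<in> D" "coeff q j0 \<in> D" using p(1) q(1) by (simp_all add: polys_over_def)
  then have "T i0 \<notin> P" using prime_ideal_mult_notin[OF P _ i0(1) _ j0(1)] unfolding T_def by simp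
  moreover have "T i0 = coeff (p * q) (i0 + j0) - (\<Sum>k\<in>{..i0+j0} - {i0}. T k)"
    using split by simp
  ultimately have "coeff (p * q) (i0 + j0) \<notin> P" using ideal_diff[OF PI _ rest] by metis
  then show ?thesis unfolding polys_over_def by blast
qed

lemma prod_not_in_polys_over_prime:
  assumes P: "prime_ideal_of D P" and "finite T"
    and T: "\<And>s. s \<in> T \<Longrightarrow> s \<in> polys_over D \<and> s \<notin> polys_over P"
  shows "\<Prod>T \<notin> polys_over P"
  using assms(2) T
proof (induction T rule: finite_induct)
  case empty
  then show ?case using prime_ideal_one_notin[OF P] by (simp add: polys_over_def exI[of _ 0])
next
  case (insert s T)
  then show ?case
    using mult_not_in_polys_over_prime[OF P] prod_polys_over by (simp add: insert_iff)
qed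

text \<open>Dividing by \<open>X - d\<close> lowers the degree by one and keeps the remaining roots, since
  \<open>d\<close> is incongruent to them modulo the prime \<open>P\<close>.\<close>
lemma card_roots_mod_prime_le:
  assumes P: "prime_ideal_of D P" and "finite S" "S \<subseteq> D"
    and "\<forall>x\<in>S. \<forall>y\<in>S. x \<noteq> y \<longrightarrow> x - y \<notin> P"
    and h: "h \<in> polys_over D" "h \<notin> polys_over P" and roots: "\<forall>x\<in>S. poly h x \<in> P"
  shows "card S \<le> degree h"
  using assms(2-)
proof (induction S arbitrary: h rule: finite_induct)
  case (insert d S)
  have PI: "ideal_of D P" using P unfolding prime_ideal_of_def by simp
  have d: "d \<in> D" "poly h d \<in> P" using insert.prems(1,5) by blast+
  define q where "q = synthetic_div h d"
  have hq: "h = [:-d, 1:] * q + [:poly h d:]" unfolding q_def by (rule synthetic_div_correct'[symmetric])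
  have qD: "q \<in> polys_over D" unfolding q_def using synthetic_div_polys_over insert.prems(3) d(1) by blast
  have qP: "q \<notin> polys_over P"
  proof
    assume "q \<in> polys_over P"
    then have "[:-d, 1:] * q + [:poly h d:] \<in> polys_over P"
      using d subring_uminus[of d]
      by (intro add_polys_over_ideal[OF PI] mult_polys_over_ideal[OF PI] const_polys_over_ideal[OF PI])
        (simp_all add: pCons_polys_over_iff zero_polys_over)
    then show False using insert.prems(4) by (simp only: hq[symmetric])
  qed
  then have "q \<noteq> 0" using zero_polys_over[OF ideal_0[OF PI]] by blast
  then have "degree h \<noteq> 0" using synthetic_div_eq_0_iff[of h d] unfolding q_def by blast
  have "card S \<le> degree q"
  proof (rule insert.IH[OF _ _ qD qP])
    show "S \<subseteq> D" "\<forall>x\<in>S. \<forall>y\<in>S. x \<noteq> y \<longrightarrow> x - y \<notin> P" using insert.prems(1,2) by blast+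
    show "\<forall>x\<in>S. poly q x \<in> P"
    proof
      fix e assume e: "e \<in> S"
      have eD: "e \<in> D" using e insert.prems(1) by blast
      have "poly h e = (e - d) * poly q e + poly h d" by (subst hq) (simp add: algebra_simps)
      then have "(e - d) * poly q e = poly h e - poly h d" by simp
      moreover have "poly h e \<in> P" using insert.prems(5) e by blast
      then have "poly h e - poly h d \<in> P" using ideal_diff[OF PI _ d(2)] by blast
      moreover have "e \<noteq> d" using e insert.hyps(2) by blast
      then have "e - d \<notin> P" using insert.prems(2) e by blast
      ultimately show "poly q e \<in> P"
        by (metis prime_ideal_mult_notin[OF P] subring_diff[OF eD d(1)] poly_mem[OF qD eD])
    qed
  qed
  moreover have "degree q = degree h - 1" unfolding q_def by (rule degree_synthetic_div)
  ultimately show ?case using \<open>degree h \<noteq> 0\<close> card_insert_disjoint[OF insert.hyps] by linarith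
qed simp

lemma coset_eq_iff:
  assumes P: "ideal_of D P"
  shows "(\<lambda>p. a + p) ` P = (\<lambda>p. b + p) ` P \<longleftrightarrow> a - b \<in> P"
proof
  assume eq: "(\<lambda>p. a + p) ` P = (\<lambda>p. b + p) ` P"
  have "a \<in> (\<lambda>p. a + p) ` P" using ideal_0[OF P] by (intro image_eqI[of _ _ 0]) simp_all
  then obtain p where "p \<in> P" "a = b + p" unfolding eq by blast
  then show "a - b \<in> P" by simp
next
  have sub: "(\<lambda>p. x + p) ` P \<subseteq> (\<lambda>p. y + p) ` P" if "x - y \<in> P" for x y
  proof
    fix z assume "z \<in> (\<lambda>p. x + p) ` P"
    then obtain p where p: "p \<in> P" "z = x + p" by blast
    then have "z = y + ((x - y) + p)" by simp
    moreover have "(x - y) + p \<in> P" using ideal_add[OF P that p(1)] .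
    ultimately show "z \<in> (\<lambda>p. y + p) ` P" by blast
  qed
  assume "a - b \<in> P"
  moreover have "b - a \<in> P" using ideal_uminus[OF P \<open>a - b \<in> P\<close>] by simp
  ultimately show "(\<lambda>p. a + p) ` P = (\<lambda>p. b + p) ` P" by (intro subset_antisym sub)
qed

lemma finite_quotient_if_poly_vanishes:
  assumes P: "prime_ideal_of D P" and h: "h \<in> polys_over D" "h \<notin> polys_over P"
    and roots: "\<forall>x\<in>D. poly h x \<in> P"
  shows "finite_quotient D P"
proof (rule ccontr)
  have PI: "ideal_of D P" using P unfolding prime_ideal_of_def by simp
  let ?coset = "\<lambda>a. (\<lambda>p. a + p) ` P"
  assume "\<not> finite_quotient D P"
  then have "infinite (?coset ` D)" unfolding finite_quotient_def .
  then obtain C where C: "C \<subseteq> ?coset ` D" "finite C" "card C = Suc (degree h)"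
    using infinite_arbitrarily_large[of "?coset ` D" "Suc (degree h)"] by blast
  from C(1) have "\<exists>S. S \<subseteq> D \<and> inj_on ?coset S \<and> C = ?coset ` S" by (simp only: subset_image_inj)
  then obtain S where S: "S \<subseteq> D" "inj_on ?coset S" "C = ?coset ` S" by blast
  have card: "card S = Suc (degree h)" using card_image[OF S(2)] C(3) unfolding S(3) by simp
  have "card S \<le> degree h"
  proof (rule card_roots_mod_prime_le[OF P _ S(1) _ h])
    show "finite S" using card by (intro card_ge_0_finite) simp
    show "\<forall>x\<in>S. \<forall>y\<in>S. x \<noteq> y \<longrightarrow> x - y \<notin> P"
    proof (intro ballI impI notI)
      fix x y assume "x \<in> S" "y \<in> S" "x \<noteq> y" "x - y \<in> P"
      then have "?coset x = ?coset y" using coset_eq_iff[OF PI, of x y] by blast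
      then show False using inj_onD[OF S(2)] \<open>x \<in> S\<close> \<open>y \<in> S\<close> \<open>x \<noteq> y\<close> by blast
    qed
    show "\<forall>x\<in>S. poly h x \<in> P" using S(1) roots by blast
  qed
  then show False using card by simp
qed

lemma finite_quotient_representatives:
  assumes P: "ideal_of D P" and fin: "finite_quotient D P"
  obtains R where "finite R" "R \<subseteq> D" "\<And>d. d \<in> D \<Longrightarrow> \<exists>r\<in>R. d - r \<in> P"
proof -
  let ?coset = "\<lambda>a. (\<lambda>p. a + p) ` P"
  obtain R where R: "R \<subseteq> D" "inj_on ?coset R" "?coset ` D = ?coset ` R"
    using subset_image_inj[THEN iffD1, OF subset_refl[of "?coset ` D"]] by (elim exE conjE)
  have "finite R" using finite_imageD[OF _ R(2)] fin R(3) unfolding finite_quotient_def by simp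
  moreover have "\<exists>r\<in>R. d - r \<in> P" if "d \<in> D" for d
  proof -
    have "?coset d \<in> ?coset ` R" unfolding R(3)[symmetric] using that by (rule imageI)
    then obtain r where "r \<in> R" "?coset d = ?coset r" by (rule imageE) simp
    then show ?thesis using coset_eq_iff[OF P, of d r] by blast
  qed
  ultimately show thesis using that R(1) by blast
qed

lemma bounded_coeffs_polys_over:
  assumes "R \<subseteq> D" "degree s \<le> n" "\<forall>i\<le>n. coeff s i \<in> R"
  shows "s \<in> polys_over D"
  unfolding polys_over_def
proof (intro CollectI allI)
  fix i show "coeff s i \<in> D"
    using assms coeff_eq_0[of s i] by (cases "i \<le> n") auto
qed

lemma exists_reduced_poly:
  assumes P: "ideal_of D P" and R: "\<And>d. d \<in> D \<Longrightarrow> \<exists>r\<in>R. d - r \<in> P"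
    and g: "g \<in> polys_over D" "degree g \<le> n"
  shows "\<exists>s. degree s \<le> n \<and> (\<forall>i\<le>n. coeff s i \<in> R) \<and> s - g \<in> polys_over P"
proof -
  have "\<forall>i. \<exists>r. r \<in> R \<and> coeff g i - r \<in> P" using R g(1) unfolding polys_over_def by blast
  then obtain r where r: "\<And>i. r i \<in> R" "\<And>i. coeff g i - r i \<in> P" by metis
  define s where "s = (\<Sum>i\<le>n. monom (r i) i)"
  have coeff_s: "coeff s i = (if i \<le> n then r i else 0)" for i
    unfolding s_def by (simp add: coeff_sum)
  have "degree s \<le> n" by (rule degree_le) (simp add: coeff_s)
  moreover have "coeff s i - coeff g i \<in> P" for i
  proof (cases "i \<le> n")
    case True
    then show ?thesis using ideal_uminus[OF P r(2)[of i]] by (simp add: coeff_s)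
  qed (use g(2) ideal_0[OF P] in \<open>simp add: coeff_s coeff_eq_0\<close>)
  ultimately show ?thesis using r(1) by (intro exI[of _ s]) (simp add: coeff_s polys_over_def)
qed

end

context dedekind_domain
begin

lemma exists_denominator: "\<exists>y\<in>D. y \<noteq> 0 \<and> smult y f \<in> polys_over D"
proof (induction f rule: pCons_induct)
  case 0
  show ?case using zero_polys_over[OF subring_0] by (intro bexI[of _ 1]) simp_all
next
  case (pCons c f)
  obtain y where y: "y \<in> D" "y \<noteq> 0" "smult y f \<in> polys_over D" using pCons.IH by blast
  obtain a b where ab: "a \<in> D" "b \<in> D" "b \<noteq> 0" "c = a / b"
    using dedekind unfolding dedekind_domain_in_def is_frac_field_of_def by blast
  have "y * b * c = y * a" using ab by simp
  then have "y * b * c \<in> D" using subring_mult[OF y(1) ab(1)] by (simp only:)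
  moreover have "smult (y * b) f \<in> polys_over D" unfolding polys_over_def
  proof (intro CollectI allI)
    fix i
    have "coeff (smult y f) i \<in> D" using y(3) unfolding polys_over_def by blast
    then have "b * coeff (smult y f) i \<in> D" by (rule subring_mult[OF ab(2)])
    moreover have "coeff (smult (y * b) f) i = b * coeff (smult y f) i" by (simp add: ac_simps)
    ultimately show "coeff (smult (y * b) f) i \<in> D" by (simp only:)
  qed
  ultimately have "smult (y * b) (pCons c f) \<in> polys_over D" by (simp add: pCons_polys_over_iff)
  then show ?case using y ab by (intro bexI[of _ "y * b"]) (simp_all add: subring_mult)
qed

text \<open>If \<open>x f \<in> P[X]\<close> for all \<open>x\<close> in the conductor \<open>J\<close>, then \<open>t J \<subseteq> J\<close> for every
  \<open>t \<in> P\<inverse> - D\<close>, contradicting integral closedness.\<close>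
lemma exists_primitive_multiple:
  assumes f: "f \<notin> polys_over D"
  shows "\<exists>P x. prime_ideal_of D P \<and> P \<noteq> {0} \<and> x \<in> P \<and>
    smult x f \<in> polys_over D \<and> smult x f \<notin> polys_over P"
proof -
  define J where "J = {x \<in> D. smult x f \<in> polys_over D}"
  have J: "ideal_of D J" unfolding ideal_of_def J_def
    by (auto simp: polys_over_def distrib_right intro: subring_add subring_mult)
      (metis mult.assoc subring_mult)
  have "1 \<notin> J" using f unfolding J_def by simp
  then have JD: "J \<noteq> D" by auto
  obtain y where "y \<in> J" "y \<noteq> 0" using exists_denominator unfolding J_def by blast
  then have J0: "J \<noteq> {0}" by blast
  obtain P where M: "maximal_ideal_of D P" and JP: "J \<subseteq> P" using exists_maximal_ideal[OF J JD] by blast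
  have P: "prime_ideal_of D P" using maximal_imp_prime_ideal[OF M] .
  have P0: "P \<noteq> {0}" using JP J0 ideal_0[OF J] by blast
  obtain t where t: "t \<notin> D" "\<forall>p\<in>P. t * p \<in> D" using prime_ideal_inverse_nontrivial[OF P P0] by blast
  have "\<exists>x\<in>J. smult x f \<notin> polys_over P"
  proof (rule ccontr)
    assume "\<not> ?thesis"
    then have inP: "\<And>x i. x \<in> J \<Longrightarrow> x * coeff f i \<in> P" unfolding polys_over_def by auto
    have "t * x \<in> J" if x: "x \<in> J" for x
    proof -
      have "t * x \<in> D" using t(2) JP x by blast
      moreover have "t * x * coeff f i \<in> D" for i
        using t(2) inP[OF x, of i] by (simp add: mult.assoc)
      ultimately show ?thesis unfolding J_def polys_over_def by simp
    qed
    then have "t \<in> D" by (rule mem_if_stabilises_ideal[OF J J0])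
    then show False using t(1) by simp
  qed
  then show ?thesis using P P0 JP unfolding J_def by blast
qed

lemma smult_inverse_not_in_polys_over:
  assumes P: "prime_ideal_of D P" "P \<noteq> {0}" and t: "t \<notin> D" "\<forall>p\<in>P. t * p \<in> D"
    and G: "G \<in> polys_over D" "G \<notin> polys_over P"
  shows "smult t G \<notin> polys_over D"
proof
  assume "smult t G \<in> polys_over D"
  obtain i where i: "coeff G i \<notin> P" using G(2) unfolding polys_over_def by blast
  have "t * coeff G i \<in> D" using \<open>smult t G \<in> polys_over D\<close> unfolding polys_over_def by simp
  then have "coeff G i \<in> P"
    using mem_maximal_if_inverse_mult[OF nonzero_prime_imp_maximal[OF P] t] G(1)
    unfolding polys_over_def by blast
  then show False using i by simp
qed

end


section \<open>Evaluation in an algebra over the fraction field\<close>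

locale central_hom =
  fixes \<iota> :: "'k::comm_ring_1 \<Rightarrow> 'b::ring_1"
  assumes hom_add: "\<iota> (x + y) = \<iota> x + \<iota> y"
    and hom_mult: "\<iota> (x * y) = \<iota> x * \<iota> y"
    and hom_one: "\<iota> 1 = 1"
    and central: "\<iota> x * b = b * \<iota> x"
begin

lemma hom_zero [simp]: "\<iota> 0 = 0"
  using hom_add[of 0 0] by simp

lemma hom_uminus: "\<iota> (- x) = - \<iota> x"
  using hom_add[of x "- x"] by (simp add: add_eq_0_iff2)

lemma hom_diff: "\<iota> (x - y) = \<iota> x - \<iota> y"
  using hom_add[of x "- y"] hom_uminus by simp

lemma hom_sum: "\<iota> (sum f S) = (\<Sum>i\<in>S. \<iota> (f i))"
  by (induction S rule: infinite_finite_induct) (auto simp: hom_add)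

lemma hom_power: "\<iota> (x ^ n) = \<iota> x ^ n"
  by (induction n) (auto simp: hom_one hom_mult)

lemma peval_eq_sum: "degree f \<le> n \<Longrightarrow> peval \<iota> f b = (\<Sum>i\<le>n. \<iota> (coeff f i) * b ^ i)"
  unfolding peval_def by (intro sum.mono_neutral_right[symmetric]) (auto simp: coeff_eq_0)

lemma peval_0 [simp]: "peval \<iota> 0 b = 0"
  by (simp add: peval_def)

lemma peval_add: "peval \<iota> (f + g) b = peval \<iota> f b + peval \<iota> g b"
proof -
  define n where "n = max (degree f) (degree g)"
  have "degree (f + g) \<le> n" "degree f \<le> n" "degree g \<le> n"
    unfolding n_def using degree_add_le_max[of f g] by auto
  then show ?thesis by (simp add: peval_eq_sum hom_add distrib_right sum.distrib)
qed

lemma peval_diff: "peval \<iota> (f - g) b = peval \<iota> f b - peval \<iota> g b"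
proof -
  define n where "n = max (degree f) (degree g)"
  have "degree (f - g) \<le> n" "degree f \<le> n" "degree g \<le> n"
    unfolding n_def using degree_diff_le_max[of f g] by auto
  then show ?thesis by (simp add: peval_eq_sum hom_diff left_diff_distrib sum_subtractf)
qed

lemma peval_smult: "peval \<iota> (smult c f) b = \<iota> c * peval \<iota> f b"
proof -
  have "degree (smult c f) \<le> degree f" by (rule degree_smult_le)
  then show ?thesis by (simp add: peval_eq_sum[of _ "degree f"] sum_distrib_left hom_mult mult.assoc)
qed

lemma peval_pCons: "peval \<iota> (pCons c f) b = \<iota> c + b * peval \<iota> f b"
proof -
  have "peval \<iota> (pCons c f) b = (\<Sum>i\<le>Suc (degree f). \<iota> (coeff (pCons c f) i) * b ^ i)"
    by (rule peval_eq_sum) simp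
  also have "\<dots> = \<iota> c + (\<Sum>i\<le>degree f. \<iota> (coeff f i) * b ^ Suc i)"
    by (subst sum.atMost_Suc_shift) simp
  also have "(\<Sum>i\<le>degree f. \<iota> (coeff f i) * b ^ Suc i) = b * peval \<iota> f b"
    unfolding peval_def sum_distrib_left
    by (intro sum.cong) (simp_all add: mult.assoc[symmetric] central[of _ b])
  finally show ?thesis .
qed

lemma peval_mult: "peval \<iota> (f * g) b = peval \<iota> f b * peval \<iota> g b"
proof (induction f rule: pCons_induct)
  case (pCons c f)
  have "peval \<iota> (pCons c f * g) b = \<iota> c * peval \<iota> g b + b * peval \<iota> (f * g) b"
    by (simp add: peval_add peval_smult peval_pCons)
  also have "\<dots> = (\<iota> c + b * peval \<iota> f b) * peval \<iota> g b"
    using pCons.IH by (simp add: distrib_right mult.assoc)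
  finally show ?case by (simp add: peval_pCons)
qed simp

lemma peval_hom: "peval \<iota> f (\<iota> d) = \<iota> (poly f d)"
  unfolding peval_def poly_altdef by (simp add: hom_sum hom_mult hom_power)

end

locale standard_algebra = dedekind_domain D + central_hom \<iota>
  for D :: "'k::field set" and \<iota> :: "'k \<Rightarrow> 'b::ring_1" +
  fixes A :: "'b set"
  assumes A_0: "0 \<in> A" and A_1: "1 \<in> A"
    and A_add: "x \<in> A \<Longrightarrow> y \<in> A \<Longrightarrow> x + y \<in> A"
    and A_mult: "x \<in> A \<Longrightarrow> y \<in> A \<Longrightarrow> x * y \<in> A"
    and hom_subring: "\<iota> ` D \<subseteq> A"
    and A_Int_range: "A \<inter> range \<iota> = \<iota> ` D"
begin

lemma hom_inj:
  assumes "\<iota> x = \<iota> y"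
  shows "x = y"
proof (rule ccontr)
  assume "x \<noteq> y"
  then have "\<iota> ((x - y) * inverse (x - y)) = 1" using hom_one by simp
  moreover have "\<iota> (x - y) = 0" using assms hom_diff by simp
  ultimately show False using hom_mult by simp
qed

lemma A_sum: "(\<And>i. i \<in> S \<Longrightarrow> f i \<in> A) \<Longrightarrow> sum f S \<in> A"
  by (induction S rule: infinite_finite_induct) (auto intro: A_add A_0)

lemma A_power: "x \<in> A \<Longrightarrow> x ^ n \<in> A"
  by (induction n) (auto intro: A_mult A_1)

lemma peval_mem: "f \<in> polys_over D \<Longrightarrow> a \<in> A \<Longrightarrow> peval \<iota> f a \<in> A"
  unfolding peval_def polys_over_def using hom_subring by (auto intro!: A_sum A_mult A_power)

lemma polys_over_subset_IntK: "polys_over D \<subseteq> IntK \<iota> A"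
  unfolding IntK_def using peval_mem by auto

lemma ext_ideal_mult_right: "x \<in> ext_ideal \<iota> P A \<Longrightarrow> y \<in> A \<Longrightarrow> x * y \<in> ext_ideal \<iota> P A"
proof (induction x rule: ext_ideal.induct)
  case (gen p a)
  then show ?case using ext_ideal.gen[of p P "a * y"] A_mult by (simp add: mult.assoc)
qed (simp_all add: distrib_right ext_ideal.zero ext_ideal.add)

lemma ext_ideal_sum: "(\<And>i. i \<in> S \<Longrightarrow> f i \<in> ext_ideal \<iota> P A) \<Longrightarrow> sum f S \<in> ext_ideal \<iota> P A"
  by (induction S rule: infinite_finite_induct) (auto intro: ext_ideal.add ext_ideal.zero)

lemma peval_ext_ideal: "f \<in> polys_over P \<Longrightarrow> a \<in> A \<Longrightarrow> peval \<iota> f a \<in> ext_ideal \<iota> P A"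
  unfolding peval_def polys_over_def by (auto intro!: ext_ideal_sum ext_ideal.gen A_power)

lemma inverse_mult_ext_ideal:
  "x \<in> ext_ideal \<iota> P A \<Longrightarrow> \<forall>p\<in>P. t * p \<in> D \<Longrightarrow> \<iota> t * x \<in> A"
proof (induction x rule: ext_ideal.induct)
  case (gen p a)
  have "\<iota> t * (\<iota> p * a) = \<iota> (t * p) * a" by (simp add: hom_mult mult.assoc)
  then show ?case using gen hom_subring A_mult by auto
qed (simp_all add: distrib_left A_add A_0)

text \<open>This is where \<open>A \<inter> K = D\<close> enters.\<close>
lemma ext_ideal_contraction:
  assumes P: "prime_ideal_of D P" "P \<noteq> {0}" and x: "x \<in> D" "\<iota> x \<in> ext_ideal \<iota> P A"
  shows "x \<in> P"
proof -
  obtain t where t: "t \<notin> D" "\<forall>p\<in>P. t * p \<in> D" using prime_ideal_inverse_nontrivial[OF P] by blast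
  have "\<iota> (t * x) \<in> A \<inter> range \<iota>" using inverse_mult_ext_ideal[OF x(2) t(2)] by (simp add: hom_mult[symmetric])
  then obtain d where "d \<in> D" "\<iota> (t * x) = \<iota> d" unfolding A_Int_range by blast
  then have "t * x \<in> D" using hom_inj by metis
  then show ?thesis using mem_maximal_if_inverse_mult[OF nonzero_prime_imp_maximal[OF P] t x(1)] by simp
qed

lemma peval_prod_ext_ideal:
  assumes "finite T" "T \<subseteq> polys_over D" "s \<in> T" "a \<in> A" "peval \<iota> s a \<in> ext_ideal \<iota> P A"
  shows "peval \<iota> (\<Prod>T) a \<in> ext_ideal \<iota> P A"
proof -
  have "\<Prod>T = s * \<Prod>(T - {s})" using assms(1,3) by (simp add: prod.remove)
  moreover have "peval \<iota> (\<Prod>(T - {s})) a \<in> A"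
    using assms(2,4) by (intro peval_mem prod_polys_over) auto
  ultimately show ?thesis using ext_ideal_mult_right[OF assms(5)] by (simp add: peval_mult)
qed

lemma exists_reduced_annihilator:
  assumes P: "ideal_of D P" and R: "\<And>d. d \<in> D \<Longrightarrow> \<exists>r\<in>R. d - r \<in> P"
    and g: "g \<in> polys_over D" "degree g \<le> n" "g \<notin> polys_over P"
    and a: "a \<in> A" "peval \<iota> g a \<in> ext_ideal \<iota> P A"
  shows "\<exists>s. degree s \<le> n \<and> (\<forall>i\<le>n. coeff s i \<in> R) \<and> s \<notin> polys_over P
    \<and> peval \<iota> s a \<in> ext_ideal \<iota> P A"
proof -
  obtain s where s: "degree s \<le> n" "\<forall>i\<le>n. coeff s i \<in> R" "s - g \<in> polys_over P"
    using exists_reduced_poly[OF P R g(1,2)] by blast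
  have "s \<notin> polys_over P" using g(3) diff_polys_over_ideal[OF P _ s(3), of s] by auto
  moreover have "peval \<iota> s a = peval \<iota> g a + peval \<iota> (s - g) a" by (simp add: peval_diff)
  then have "peval \<iota> s a \<in> ext_ideal \<iota> P A"
    using a(2) peval_ext_ideal[OF s(3) a(1)] by (simp add: ext_ideal.add)
  ultimately show ?thesis using s(1,2) by blast
qed

lemma bounded_degree_if_IntK_exceeds:
  assumes f: "f \<in> IntK \<iota> A" "f \<notin> polys_over D"
  shows "\<exists>P. prime_ideal_of D P \<and> P \<noteq> {0} \<and> finite_quotient D P \<and> alg_bounded_degree_mod \<iota> D P A"
proof -
  obtain P x where P: "prime_ideal_of D P" "P \<noteq> {0}" and x: "x \<in> P"
    and h: "smult x f \<in> polys_over D" "smult x f \<notin> polys_over P"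
    using exists_primitive_multiple[OF f(2)] by blast
  define h where "h = smult x f"
  have hval: "peval \<iota> h a \<in> ext_ideal \<iota> P A" if "a \<in> A" for a
    unfolding h_def peval_smult using x f(1) that by (auto simp: IntK_def intro: ext_ideal.gen)
  have "alg_bounded_degree_mod \<iota> D P A"
    unfolding alg_bounded_degree_mod_def using h hval unfolding h_def polys_over_def by blast
  moreover have "finite_quotient D P"
  proof (rule finite_quotient_if_poly_vanishes[OF P(1) h[folded h_def]], intro ballI)
    fix d assume d: "d \<in> D"
    have "\<iota> (poly h d) \<in> ext_ideal \<iota> P A" using hval[of "\<iota> d"] d hom_subring by (auto simp: peval_hom)
    then show "poly h d \<in> P" using ext_ideal_contraction[OF P poly_mem[OF h(1)[folded h_def] d]] by blast
  qed
  ultimately show ?thesis using P by blast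
qed

lemma IntK_exceeds_if_bounded_degree:
  assumes P: "prime_ideal_of D P" "P \<noteq> {0}" and fin: "finite_quotient D P"
    and alg: "alg_bounded_degree_mod \<iota> D P A"
  shows "\<exists>f. f \<in> IntK \<iota> A \<and> f \<notin> polys_over D"
proof -
  have PI: "ideal_of D P" using P unfolding prime_ideal_of_def by simp
  obtain n where n: "\<forall>a\<in>A. \<exists>g. g \<in> polys_over D \<and> degree g \<le> n \<and> (\<exists>i. coeff g i \<notin> P)
      \<and> peval \<iota> g a \<in> ext_ideal \<iota> P A"
    using alg unfolding alg_bounded_degree_mod_def by blast
  obtain R where R: "finite R" "R \<subseteq> D" "\<And>d. d \<in> D \<Longrightarrow> \<exists>r\<in>R. d - r \<in> P"
    using finite_quotient_representatives[OF PI fin] by blast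
  define S where "S = {s. degree s \<le> n \<and> (\<forall>i\<le>n. coeff s i \<in> R) \<and> s \<notin> polys_over P}"
  have finS: "finite S"
    unfolding S_def by (rule finite_subset[OF _ finite_bounded_polys[OF R(1), of n]]) auto
  have SD: "S \<subseteq> polys_over D" unfolding S_def using bounded_coeffs_polys_over[OF R(2)] by blast
  define G where "G = \<Prod>S"
  have G_val: "peval \<iota> G a \<in> ext_ideal \<iota> P A" if a: "a \<in> A" for a
  proof -
    obtain g where g: "g \<in> polys_over D" "degree g \<le> n" "\<exists>i. coeff g i \<notin> P"
      "peval \<iota> g a \<in> ext_ideal \<iota> P A" using n a by blast
    have "g \<notin> polys_over P" using g(3) unfolding polys_over_def by blast
    then obtain s where "s \<in> S" "peval \<iota> s a \<in> ext_ideal \<iota> P A"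
      using exists_reduced_annihilator[OF PI R(3) g(1,2) _ a g(4)] unfolding S_def by blast
    then show ?thesis unfolding G_def using peval_prod_ext_ideal[OF finS SD _ a] by blast
  qed
  obtain t where t: "t \<notin> D" "\<forall>p\<in>P. t * p \<in> D"
    using prime_ideal_inverse_nontrivial[OF P] by blast
  have "smult t G \<in> IntK \<iota> A" unfolding IntK_def
  proof (intro CollectI ballI)
    fix a assume "a \<in> A"
    show "peval \<iota> (smult t G) a \<in> A"
      unfolding peval_smult by (rule inverse_mult_ext_ideal[OF G_val[OF \<open>a \<in> A\<close>] t(2)])
  qed
  moreover have "G \<in> polys_over D" unfolding G_def using SD by (intro prod_polys_over) blast
  moreover have "G \<notin> polys_over P"
    unfolding G_def using SD by (intro prod_not_in_polys_over_prime[OF P(1) finS]) (auto simp: S_def)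
  ultimately show ?thesis using smult_inverse_not_in_polys_over[OF P t] by blast
qed

end

theorem mainTheorem9:
  fixes D :: "'k::field set" and A :: "'b::ring_1 set" and \<iota> :: "'k \<Rightarrow> 'b"
  assumes ded: "dedekind_domain_in D"
    and hom_add: "\<And>x y. \<iota> (x + y) = \<iota> x + \<iota> y"
    and hom_mult: "\<And>x y. \<iota> (x * y) = \<iota> x * \<iota> y"
    and hom_one: "\<iota> 1 = 1"
    and central: "\<And>x b. \<iota> x * b = b * \<iota> x"
    and A_sub: "0 \<in> A" "1 \<in> A" "\<And>x y. x \<in> A \<Longrightarrow> y \<in> A \<Longrightarrow> x + y \<in> A"
      "\<And>x. x \<in> A \<Longrightarrow> - x \<in> A" "\<And>x y. x \<in> A \<Longrightarrow> y \<in> A \<Longrightarrow> x * y \<in> A"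
    and D_in_A: "\<iota> ` D \<subseteq> A"
    and tensor: "\<And>b. \<exists>d\<in>D. d \<noteq> 0 \<and> \<iota> d * b \<in> A"
    and std: "A \<inter> range \<iota> = \<iota> ` D"
  shows "IntK \<iota> A \<noteq> polys_over D \<longleftrightarrow>
    (\<exists>P. prime_ideal_of D P \<and> P \<noteq> {0} \<and> finite_quotient D P \<and>
         alg_bounded_degree_mod \<iota> D P A)"
proof -
  interpret standard_algebra D \<iota> A
    by unfold_locales (fact assms)+
  show ?thesis
  proof
    assume "IntK \<iota> A \<noteq> polys_over D"
    then obtain f where "f \<in> IntK \<iota> A" "f \<notin> polys_over D" using polys_over_subset_IntK by blast
    then show "\<exists>P. prime_ideal_of D P \<and> P \<noteq> {0} \<and> finite_quotient D P \<and> alg_bounded_degree_mod \<iota> D P A"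
      by (rule bounded_degree_if_IntK_exceeds)
  next
    assume "\<exists>P. prime_ideal_of D P \<and> P \<noteq> {0} \<and> finite_quotient D P \<and> alg_bounded_degree_mod \<iota> D P A"
    then obtain P where "prime_ideal_of D P" "P \<noteq> {0}" "finite_quotient D P" "alg_bounded_degree_mod \<iota> D P A"
      by blast
    then show "IntK \<iota> A \<noteq> polys_over D" using IntK_exceeds_if_bounded_degree by blast
  qed
qed

end
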